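(* Fix $h>0$ and $\lambda\ge 0$, and consider the Markov decision process with state $\Delta\in\{1,2,3,\dots\}$ (the discretized age of information), action $\delta\in\{0,1\}$, deterministic transitions $\Delta'=\Delta+1$ if $\delta=0$ and $\Delta'=1$ if $\delta=1$, and per-stage cost $\bar U(\Delta,\delta)=U(\Delta)+\lambda\delta$, where $$U(\Delta)=\mathrm{tr}\Big(M_1\sum_{i=0}^{\Delta-1}e^{\tilde A ih}\,\tilde G^h\,e^{\tilde A^\top ih}\Big).$$ For $\beta\in(0,1)$ let $V^h_{\beta,\lambda}(\Delta)$ be the optimal $\beta$-discounted value function (infimum over admissible sensing policies of $\mathbb E[\sum_{k\ge0}\beta^k\bar U(\Delta_k,\delta_k)]$ starting from $\Delta_0=\Delta$). Let $\beta_\ell\nearrow 1$, let $\eta_{\beta_\ell}$ be thresholds such that the policy $\delta_k=\mathbb I[\Delta_k\ge \eta_{\beta_\ell}]$ is $\beta_\ell$-optimal, and let $\bar\eta_\lambda$ be the limit of $\eta_{\beta_{\ell_p}}$ along a converging subsequence $\beta_{\ell_p}$. Then the limit $\bar V^h_\lambda:=\lim_{\beta\nearrow1}(1-\beta)V^h_{\beta,\lambda}(\Delta)$ exists and is the same for every $\Delta$, and there is a function $f^h_\lambda$, obtained as a limit of the relative value functions $V^h_{\beta,\lambda}(\Delta)-V^h_{\beta,\lambda}(1)$ as $\beta\nearrow1$ (along a suitable sequence), such that for all $\Delta$ $$\bar V^h_\lambda+f^h_\lambda(\Delta)=\min_{\delta\in\{0,1\}}\big\{\bar U(\Delta,\delta)+f^h_\lambda(\Delta')\big\},$$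 where $\Delta'$ is the successor state of $(\Delta,\delta)$. Moreover, the stationary policy $\delta_k^*=\mathbb I[\Delta_k\ge\bar\eta_\lambda]$ achieves the minimum on the right-hand side of this equation and is average-cost optimal, i.e. it minimizes $\limsup_{m\to\infty}\frac1m\mathbb E\big[\sum_{k=0}^m\bar U(\Delta_k,\delta_k)\big]$ over admissible sensing policies.
   Context: Underlying game: $dx=[Ax+B_1u_1+B_2u_2]dt+G\,dW$, with $Q\succeq0$, $R_1,R_2\succ0$. $P\succeq0$ is the minimal positive-semidefinite solution of $A^\top P+PA+Q+P(B_2R_2^{-1}B_2^\top-B_1R_1^{-1}B_1^\top)P=0$ (assumed to exist). Define $\tilde A=A+B_2R_2^{-1}B_2^\top P$, $M_1=PB_1R_1^{-1}B_1^\top P$, and $\tilde G^h=\int_0^h e^{\tilde A s}GG^\top e^{\tilde A^\top s}\,ds$. A sensing policy chooses $\delta_k\in\{0,1\}$ at each discrete step $k$ (sensing at time $kh$), using past information; $\Delta_k$ is the number of steps since the last sensing. It is known (and may be used as given) that for each $\beta\in(0,1)$ the $\beta$-discounted value function satisfies the Bellman equation $V^h_{\beta,\lambda}(\Delta)=\min_\delta\{\bar U(\Delta,\delta)+\beta V^h_{\beta,\lambda}(\Delta')\}$ and that a $\beta$-optimal policy of threshold form $\delta_k=\mathbb I[\Delta_k\ge\eta_{\beta,\lambda}]$ exists. *)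

theory Defs
  imports "HOL-Analysis.Analysis"
begin

definition mpow :: "real^'n^'n \<Rightarrow> nat \<Rightarrow> real^'n^'n" where
  "mpow A k = ((\<lambda>X. X ** A) ^^ k) (mat 1)"

definition mexp :: "real^'n^'n \<Rightarrow> real^'n^'n" where
  "mexp A = (\<Sum>k. (1 / fact k) *\<^sub>R mpow A k)"

definition psd :: "real^'n^'n \<Rightarrow> bool" where
  "psd X \<longleftrightarrow> transpose X = X \<and> (\<forall>x. 0 \<le> x \<bullet> (X *v x))"

definition pd :: "real^'n^'n \<Rightarrow> bool" where
  "pd X \<longleftrightarrow> transpose X = X \<and> (\<forall>x. x \<noteq> 0 \<longrightarrow> 0 < x \<bullet> (X *v x))"

definition riccati ::
  "real^'n^'n \<Rightarrow> real^'m1^'n \<Rightarrow> real^'m2^'n \<Rightarrow> real^'n^'n \<Rightarrow>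
   real^'m1^'m1 \<Rightarrow> real^'m2^'m2 \<Rightarrow> real^'n^'n \<Rightarrow> bool" where
  "riccati A B1 B2 Q R1 R2 P \<longleftrightarrow>
     transpose A ** P + P ** A + Q
     + P ** (B2 ** matrix_inv R2 ** transpose B2 - B1 ** matrix_inv R1 ** transpose B1) ** P = 0"

definition Atil :: "real^'n^'n \<Rightarrow> real^'m2^'n \<Rightarrow> real^'m2^'m2 \<Rightarrow> real^'n^'n \<Rightarrow> real^'n^'n" where
  "Atil A B2 R2 P = A + B2 ** matrix_inv R2 ** transpose B2 ** P"

definition M1mat :: "real^'m1^'n \<Rightarrow> real^'m1^'m1 \<Rightarrow> real^'n^'n \<Rightarrow> real^'n^'n" where
  "M1mat B1 R1 P = P ** B1 ** matrix_inv R1 ** transpose B1 ** P"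

definition Gtil :: "real^'n^'n \<Rightarrow> real^'w^'n \<Rightarrow> real \<Rightarrow> real^'n^'n" where
  "Gtil At G h = integral {0..h}
     (\<lambda>s. mexp (s *\<^sub>R At) ** G ** transpose G ** mexp (s *\<^sub>R transpose At))"

definition Ucost ::
  "real^'n^'n \<Rightarrow> real^'m1^'n \<Rightarrow> real^'m2^'n \<Rightarrow> real^'m1^'m1 \<Rightarrow> real^'m2^'m2 \<Rightarrow>
   real^'w^'n \<Rightarrow> real^'n^'n \<Rightarrow> real \<Rightarrow> nat \<Rightarrow> real" where
  "Ucost A B1 B2 R1 R2 G P h \<Delta> =
     (let At = Atil A B2 R2 P in
      trace (M1mat B1 R1 P **
        (\<Sum>i<\<Delta>. mexp ((real i * h) *\<^sub>R At) ** Gtil At G h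
                  ** mexp ((real i * h) *\<^sub>R transpose At))))"

definition succ :: "nat \<Rightarrow> bool \<Rightarrow> nat" where
  "succ \<Delta> d = (if d then 1 else Suc \<Delta>)"

definition stage_cost :: "(nat \<Rightarrow> real) \<Rightarrow> real \<Rightarrow> nat \<Rightarrow> bool \<Rightarrow> real" where
  "stage_cost U lam \<Delta> d = U \<Delta> + lam * (if d then 1 else 0)"

text \<open>Age trajectory under an action sequence d (a sensing policy from a fixed
  initial state; since the dynamics of \<Delta> are deterministic every admissible
  policy induces such a sequence).\<close>
fun age :: "nat \<Rightarrow> (nat \<Rightarrow> bool) \<Rightarrow> nat \<Rightarrow> nat" where
  "age \<Delta>0 d 0 = \<Delta>0"
| "age \<Delta>0 d (Suc k) = succ (age \<Delta>0 d k) (d k)"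

definition disc_cost :: "(nat \<Rightarrow> real) \<Rightarrow> real \<Rightarrow> real \<Rightarrow> nat \<Rightarrow> (nat \<Rightarrow> bool) \<Rightarrow> ennreal" where
  "disc_cost U lam \<beta> \<Delta>0 d = (\<Sum>k. ennreal (\<beta> ^ k * stage_cost U lam (age \<Delta>0 d k) (d k)))"

definition Vdisc :: "(nat \<Rightarrow> real) \<Rightarrow> real \<Rightarrow> real \<Rightarrow> nat \<Rightarrow> real" where
  "Vdisc U lam \<beta> \<Delta>0 = enn2real (INF d. disc_cost U lam \<beta> \<Delta>0 d)"

definition avg_cost :: "(nat \<Rightarrow> real) \<Rightarrow> real \<Rightarrow> nat \<Rightarrow> (nat \<Rightarrow> bool) \<Rightarrow> ereal" where
  "avg_cost U lam \<Delta>0 d =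
     limsup (\<lambda>m. ereal ((1 / real m) * (\<Sum>k\<le>m. stage_cost U lam (age \<Delta>0 d k) (d k))))"

fun sage :: "(nat \<Rightarrow> bool) \<Rightarrow> nat \<Rightarrow> nat \<Rightarrow> nat" where
  "sage \<mu> \<Delta>0 0 = \<Delta>0"
| "sage \<mu> \<Delta>0 (Suc k) = succ (sage \<mu> \<Delta>0 k) (\<mu> (sage \<mu> \<Delta>0 k))"

definition stat_acts :: "(nat \<Rightarrow> bool) \<Rightarrow> nat \<Rightarrow> nat \<Rightarrow> bool" where
  "stat_acts \<mu> \<Delta>0 k = \<mu> (sage \<mu> \<Delta>0 k)"

definition thr :: "nat \<Rightarrow> nat \<Rightarrow> bool" where
  "thr \<eta> \<Delta> \<longleftrightarrow> \<eta> \<le> \<Delta>"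

end

theory Submission
  imports Defs
begin

text \<open>Along the subsequence the optimal thresholds are eventually \<open>\<eta>bar\<close>, so the threshold
  policy \<open>\<eta>bar\<close> is optimal for discount factors \<open>\<gamma> j \<rightarrow> 1\<close> and there the value function is
  its cost \<open>J\<close>. From age \<open>1\<close> this policy is periodic with period \<open>L = max \<eta>bar 1\<close>, so
  \<open>(1 - b) J\<close> tends to the cycle average \<open>g\<close>, and the relative costs \<open>J b \<Delta> - J b 1\<close>
  converge by backward induction from \<open>L\<close>; their limit \<open>f\<close> satisfies the average cost
  optimality equation because the Bellman equation passes to the limit along \<open>\<gamma>\<close>.
  Comparing \<open>\<eta>bar\<close> with every other threshold in the limit shows that no renewal cycle
  is cheaper than \<open>g\<close> on average. Hence \<open>a \<mapsto> -(\<Sum>k<a-1. U (k+1) - g)\<close> is a subsolution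
  of the optimality equation bounded above by \<open>lam\<close>, and telescoping it along an arbitrary
  trajectory bounds the discounted cost below by \<open>g/(1-b) - const\<close> and the average cost
  below by \<open>g\<close>; telescoping \<open>f\<close> along the threshold trajectory gives the matching upper
  bound. All costs are finite and nonnegative because \<open>U\<close> is the trace of a positive
  semidefinite matrix against Gram matrices.\<close>

section \<open>Nonnegativity of the stage cost\<close>

lemma pd_invertible:
  fixes R :: "real^'m^'m"
  assumes "pd R"
  shows "invertible R"
proof -
  have "\<forall>x. R *v x = 0 \<longrightarrow> x = 0"
    using assms unfolding pd_def by (metis inner_zero_right less_irrefl)
  then show ?thesis
    using matrix_left_invertible_ker invertible_left_inverse by blast
qed

lemma matrix_mul_matrix_inv:
  fixes R :: "'a::semiring_1^'m^'m"
  assumes "invertible R"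
  shows "R ** matrix_inv R = mat 1"
  using assms unfolding invertible_def matrix_inv_def
  by (rule someI_ex[where P = "\<lambda>R'. R ** R' = mat 1 \<and> R' ** R = mat 1", THEN conjunct1])

lemma pd_matrix_inv_nonneg:
  fixes R :: "real^'m^'m"
  assumes "pd R"
  shows "0 \<le> y \<bullet> (matrix_inv R *v y)"
proof -
  define z where "z = matrix_inv R *v y"
  have "R *v z = y"
    unfolding z_def
    by (simp add: matrix_vector_mul_assoc matrix_mul_matrix_inv[OF pd_invertible[OF assms]])
  then have "y \<bullet> z = z \<bullet> (R *v z)"
    by (metis inner_commute)
  also have "\<dots> \<ge> 0"
    using assms unfolding pd_def by (cases "z = 0") (auto simp: less_imp_le)
  finally show ?thesis
    unfolding z_def .
qed

lemma M1mat_nonneg: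
  fixes P :: "real^'n^'n" and B1 :: "real^'m^'n"
  assumes "psd P" "pd R1"
  shows "0 \<le> x \<bullet> (M1mat B1 R1 P *v x)"
proof -
  have P_sym: "transpose P = P"
    using assms(1) unfolding psd_def by simp
  define y where "y = transpose B1 *v (P *v x)"
  have "M1mat B1 R1 P *v x = P *v (B1 *v (matrix_inv R1 *v y))"
    unfolding M1mat_def y_def by (simp add: matrix_vector_mul_assoc matrix_mul_assoc)
  then have "x \<bullet> (M1mat B1 R1 P *v x) = y \<bullet> (matrix_inv R1 *v y)"
    by (metis P_sym dot_lmul_matrix transpose_matrix_vector y_def)
  then show ?thesis
    using pd_matrix_inv_nonneg[OF assms(2)] by simp
qed

lemma trace_mul_gram_nonneg:
  fixes M :: "real^'n^'n" and F :: "real^'k^'n"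
  assumes "\<And>x. 0 \<le> x \<bullet> (M *v x)"
  shows "0 \<le> trace (M ** (F ** transpose F))"
proof -
  have "trace (M ** (F ** transpose F)) = (\<Sum>j\<in>UNIV. column j F \<bullet> (M *v column j F))"
    by (simp add: trace_def matrix_matrix_mult_def transpose_def inner_vec_def column_def
        matrix_vector_mult_def sum_distrib_left sum_distrib_right mult_ac sum.swap[of _ "UNIV::'k set"])
  also have "\<dots> \<ge> 0"
    using assms by (simp add: sum_nonneg)
  finally show ?thesis .
qed

lemma mpow_0: "mpow A 0 = mat 1"
  by (simp add: mpow_def)

lemma mpow_Suc: "mpow A (Suc k) = mpow A k ** A"
  by (simp add: mpow_def)

lemma mpow_commute: "mpow A k ** A = A ** mpow A k"
  by (induction k) (simp_all add: mpow_0 mpow_Suc matrix_mul_assoc[symmetric])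

lemma mpow_transpose: "mpow (transpose A) k = transpose (mpow A k)"
  by (induction k) (simp_all add: mpow_0 mpow_Suc matrix_transpose_mul mpow_commute)

lemma abs_mpow_entry_le:
  fixes A :: "real^'n^'n"
  shows "\<bar>mpow A k $ i $ j\<bar> \<le> (\<Sum>a\<in>UNIV. \<Sum>b\<in>UNIV. \<bar>A $ a $ b\<bar>) ^ k"
proof (induction k arbitrary: j)
  case 0
  then show ?case
    by (simp add: mpow_0 mat_def)
next
  case (Suc k)
  define s where "s = (\<Sum>a\<in>UNIV. \<Sum>b\<in>UNIV. \<bar>A $ a $ b\<bar>)"
  have column_le: "(\<Sum>l\<in>UNIV. \<bar>A $ l $ j\<bar>) \<le> s"
    unfolding s_def by (intro sum_mono member_le_sum) auto
  have "\<bar>mpow A (Suc k) $ i $ j\<bar> \<le> (\<Sum>l\<in>UNIV. \<bar>mpow A k $ i $ l\<bar> * \<bar>A $ l $ j\<bar>)"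
    unfolding mpow_Suc matrix_matrix_mult_def by (simp add: abs_mult[symmetric] sum_abs)
  also have "\<dots> \<le> (\<Sum>l\<in>UNIV. s ^ k * \<bar>A $ l $ j\<bar>)"
    by (intro sum_mono mult_right_mono) (use Suc s_def in auto)
  also have "\<dots> \<le> s ^ k * s"
    using column_le by (simp add: sum_distrib_left[symmetric] mult_left_mono s_def sum_nonneg)
  finally show ?case
    by (simp add: s_def mult.commute)
qed

lemma norm_le_sum_abs_entries:
  fixes X :: "real^'n^'m"
  shows "norm X \<le> (\<Sum>a\<in>UNIV. \<Sum>b\<in>UNIV. \<bar>X $ a $ b\<bar>)"
proof -
  have "norm X \<le> (\<Sum>a\<in>UNIV. norm (X $ a))"
    unfolding norm_vec_def by (rule L2_set_le_sum) simp
  also have "\<dots> \<le> (\<Sum>a\<in>UNIV. \<Sum>b\<in>UNIV. \<bar>X $ a $ b\<bar>)"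
    by (intro sum_mono norm_le_l1_cart)
  finally show ?thesis .
qed

lemma summable_mexp_series:
  fixes A :: "real^'n^'n"
  shows "summable (\<lambda>k. (1 / fact k) *\<^sub>R mpow A k)"
proof -
  define s where "s = (\<Sum>a\<in>UNIV. \<Sum>b\<in>UNIV. \<bar>A $ a $ b\<bar>)"
  define C where "C = real (CARD('n) * CARD('n))"
  have "norm ((1 / fact k) *\<^sub>R mpow A k) \<le> C * (inverse (fact k) * s ^ k)" for k
  proof -
    have "norm (mpow A k) \<le> (\<Sum>a\<in>UNIV. \<Sum>b\<in>UNIV. \<bar>mpow A k $ a $ b\<bar>)"
      by (rule norm_le_sum_abs_entries)
    also have "\<dots> \<le> (\<Sum>a\<in>(UNIV::'n set). \<Sum>b\<in>(UNIV::'n set). s ^ k)"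
      by (intro sum_mono) (simp add: s_def abs_mpow_entry_le)
    also have "\<dots> = C * s ^ k"
      by (simp add: C_def)
    finally show ?thesis
      by (simp add: divide_inverse mult_left_mono mult_ac)
  qed
  moreover have "summable (\<lambda>k. C * (inverse (fact k) * s ^ k))"
    by (intro summable_mult summable_exp)
  ultimately show ?thesis
    by (rule summable_comparison_test'[rotated])
qed

lemma bounded_linear_transpose: "bounded_linear (transpose :: real^'n^'m \<Rightarrow> real^'m^'n)"
proof -
  have "linear (transpose :: real^'n^'m \<Rightarrow> real^'m^'n)"
    by (rule linearI) (simp_all add: transpose_def vec_eq_iff)
  then show ?thesis
    by (simp add: linear_conv_bounded_linear)
qed

lemma mexp_transpose:
  fixes A :: "real^'n^'n"
  shows "mexp (transpose A) = transpose (mexp A)"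
  unfolding mexp_def
  by (simp add: bounded_linear.suminf[OF bounded_linear_transpose summable_mexp_series]
      transpose_scalar mpow_transpose)

lemma trace_mul_sum:
  fixes M :: "real^'n^'n"
  shows "trace (M ** (\<Sum>i\<in>S. Y i)) = (\<Sum>i\<in>S. trace (M ** Y i))"
proof (induction S rule: infinite_finite_induct)
  case (insert x F)
  then show ?case
    by (simp add: matrix_add_ldistrib trace_add)
qed (simp_all add: trace_def matrix_matrix_mult_def)

lemma bounded_linear_trace_congruence:
  fixes M E :: "real^'n^'n"
  shows "bounded_linear (\<lambda>X. trace (M ** (E ** X ** transpose E)))"
proof -
  have "linear (\<lambda>X::real^'n^'n. trace (M ** (E ** X ** transpose E)))"
    by (rule linearI) (simp_all add: trace_def matrix_matrix_mult_def sum_distrib_left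
        sum_distrib_right algebra_simps sum.distrib scaleR_sum_right)
  then show ?thesis
    by (simp add: linear_conv_bounded_linear)
qed

text \<open>Every summand of \<open>Ucost\<close>, and every value of the integrand of \<open>Gtil\<close>, has the form
  \<open>trace (M ** (F ** transpose F))\<close> with \<open>M = M1mat B1 R1 P\<close> positive semidefinite;
  integration is pushed through the (linear) map \<open>X \<mapsto> trace (M ** (E ** X ** transpose E))\<close>.\<close>
lemma Ucost_nonneg:
  fixes P :: "real^'n^'n" and B1 :: "real^'m1^'n" and B2 :: "real^'m2^'n"
    and R1 :: "real^'m1^'m1" and R2 :: "real^'m2^'m2" and G :: "real^'w^'n"
  assumes "psd P" "pd R1"
  shows "0 \<le> Ucost A B1 B2 R1 R2 G P h D"
proof -
  define At where "At = Atil A B2 R2 P"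
  define M where "M = M1mat B1 R1 P"
  define E where "E = (\<lambda>i::nat. mexp ((real i * h) *\<^sub>R At))"
  define F where "F = (\<lambda>s. mexp (s *\<^sub>R At) ** G)"
  define T where "T = (\<lambda>X. \<Sum>i<D. trace (M ** (E i ** X ** transpose (E i))))"
  have M_nonneg: "\<And>x. 0 \<le> x \<bullet> (M *v x)"
    unfolding M_def by (rule M1mat_nonneg[OF assms])
  have E_transpose: "mexp ((real i * h) *\<^sub>R transpose At) = transpose (E i)" for i
    by (simp add: E_def transpose_scalar[symmetric] mexp_transpose)
  have integrand: "(\<lambda>s. mexp (s *\<^sub>R At) ** G ** transpose G ** mexp (s *\<^sub>R transpose At))
      = (\<lambda>s. F s ** transpose (F s))"
    by (simp add: F_def transpose_scalar[symmetric] mexp_transpose matrix_transpose_mul matrix_mul_assoc)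
  have U_eq: "Ucost A B1 B2 R1 R2 G P h D = T (integral {0..h} (\<lambda>s. F s ** transpose (F s)))"
    unfolding Ucost_def T_def Let_def At_def[symmetric] M_def[symmetric] Gtil_def integrand
    by (simp add: E_transpose E_def trace_mul_sum)
  have T_linear: "bounded_linear T"
    unfolding T_def by (intro bounded_linear_sum bounded_linear_trace_congruence)
  have T_nonneg: "0 \<le> T (F s ** transpose (F s))" for s
  proof -
    have congruence: "E i ** (F s ** transpose (F s)) ** transpose (E i)
        = (E i ** F s) ** transpose (E i ** F s)" for i
      by (simp add: matrix_transpose_mul matrix_mul_assoc)
    show ?thesis
      unfolding T_def congruence by (intro sum_nonneg trace_mul_gram_nonneg[OF M_nonneg])
  qed
  show ?thesis
  proof (cases "(\<lambda>s. F s ** transpose (F s)) integrable_on {0..h}")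
    case True
    have "T (integral {0..h} (\<lambda>s. F s ** transpose (F s)))
        = integral {0..h} (\<lambda>s. T (F s ** transpose (F s)))"
      using integral_linear[OF True T_linear] by (simp add: o_def)
    also have "\<dots> \<ge> 0"
      using integrable_linear[OF True T_linear] T_nonneg by (intro integral_nonneg) (auto simp: o_def)
    finally show ?thesis
      using U_eq by simp
  next
    case False
    then show ?thesis
      using U_eq by (simp add: not_integrable_integral T_def trace_def matrix_matrix_mult_def)
  qed
qed

section \<open>Threshold policies\<close>

definition threshold_cost :: "(nat \<Rightarrow> real) \<Rightarrow> real \<Rightarrow> nat \<Rightarrow> real \<Rightarrow> nat \<Rightarrow> real" where
  "threshold_cost U lam \<eta> b \<Delta> =
     (\<Sum>k. b ^ k * stage_cost U lam (sage (thr \<eta>) \<Delta> k) (thr \<eta> (sage (thr \<eta>) \<Delta> k)))"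

text \<open>Discounted cost of one renewal cycle of length \<open>l\<close> started at age \<open>1\<close>: the policy waits
  \<open>l - 1\<close> steps and senses at the \<open>l\<close>-th.\<close>
definition cycle_cost :: "(nat \<Rightarrow> real) \<Rightarrow> real \<Rightarrow> nat \<Rightarrow> real \<Rightarrow> real" where
  "cycle_cost U lam l b = (\<Sum>k<l. b ^ k * U (Suc k)) + b ^ (l - 1) * lam"

definition threshold_avg :: "(nat \<Rightarrow> real) \<Rightarrow> real \<Rightarrow> nat \<Rightarrow> real" where
  "threshold_avg U lam \<eta> = cycle_cost U lam (max \<eta> 1) 1 / max \<eta> 1"

definition threshold_bias :: "(nat \<Rightarrow> real) \<Rightarrow> real \<Rightarrow> nat \<Rightarrow> nat \<Rightarrow> real" where
  "threshold_bias U lam \<eta> \<Delta> =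
     Lim (at_left 1) (\<lambda>b. threshold_cost U lam \<eta> b \<Delta> - threshold_cost U lam \<eta> b 1)"

lemma age_stat_acts: "age \<Delta> (stat_acts \<mu> \<Delta>) k = sage \<mu> \<Delta> k"
  by (induction k) (simp_all add: stat_acts_def)

lemma sage_Suc_shift: "sage \<mu> \<Delta> (Suc k) = sage \<mu> (succ \<Delta> (\<mu> \<Delta>)) k"
  by (induction k) simp_all

lemma succ_ge_1: "1 \<le> succ a d"
  by (simp add: succ_def)

lemma age_ge_1: "1 \<le> \<Delta> \<Longrightarrow> 1 \<le> age \<Delta> d k"
  by (cases k) (simp_all add: succ_def)

lemma sage_ge_1: "1 \<le> \<Delta> \<Longrightarrow> 1 \<le> sage \<mu> \<Delta> k"
  by (cases k) (simp_all add: succ_def)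

lemma sage_thr_le: "sage (thr \<eta>) \<Delta> k \<le> max \<Delta> (max \<eta> 1)"
  by (induction k) (auto simp: succ_def thr_def)

lemma thr_iff: "1 \<le> a \<Longrightarrow> thr \<eta> a \<longleftrightarrow> max \<eta> 1 \<le> a"
  by (auto simp: thr_def)

lemma sage_thr_from_1: "sage (thr \<eta>) 1 k = k mod max \<eta> 1 + 1"
proof (induction k)
  case 0
  then show ?case
    by simp
next
  case (Suc k)
  have "k mod max \<eta> 1 < max \<eta> 1"
    by simp
  then consider "k mod max \<eta> 1 + 1 = max \<eta> 1" | "k mod max \<eta> 1 + 1 < max \<eta> 1"
    by linarith
  then show ?case
    using Suc by cases (simp_all add: mod_Suc succ_def thr_iff)
qed

lemma limsup_ereal_const_plus_div:
  "limsup (\<lambda>m. ereal (g + C / real m)) = ereal g"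
proof -
  have "(\<lambda>m. g + C / real m) \<longlonglongrightarrow> g + 0"
    by (intro tendsto_intros)
  then show ?thesis
    by (intro lim_imp_Limsup trivial_limit_sequentially tendsto_ereal) simp
qed

lemma eventually_discount_at_left_1: "eventually (\<lambda>b. 0 < b \<and> b < 1) (at_left (1::real))"
  using eventually_at_left_real[of 0 "1::real"] by simp

locale sensing_mdp =
  fixes U :: "nat \<Rightarrow> real" and lam :: real
  assumes U_nonneg: "\<And>a. 0 \<le> U a" and lam_nonneg: "0 \<le> lam"
begin

lemma stage_cost_nonneg: "0 \<le> stage_cost U lam a d"
  using U_nonneg[of a] lam_nonneg by (simp add: stage_cost_def)

lemma stage_cost_le: "a \<le> M \<Longrightarrow> stage_cost U lam a d \<le> (\<Sum>i\<le>M. U i) + lam"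
  using member_le_sum[of a "{..M}" U] U_nonneg lam_nonneg by (simp add: stage_cost_def)

lemma summable_threshold_cost:
  assumes "0 \<le> b" "b < 1"
  shows "summable (\<lambda>k. b ^ k * stage_cost U lam (sage (thr \<eta>) \<Delta> k) (thr \<eta> (sage (thr \<eta>) \<Delta> k)))"
proof (rule summable_comparison_test')
  define B where "B = (\<Sum>i\<le>max \<Delta> (max \<eta> 1). U i) + lam"
  show "summable (\<lambda>k. B * b ^ k)"
    using assms by (intro summable_mult summable_geometric) simp
  show "norm (b ^ k * stage_cost U lam (sage (thr \<eta>) \<Delta> k) (thr \<eta> (sage (thr \<eta>) \<Delta> k)))
      \<le> B * b ^ k" for k
    using stage_cost_le[OF sage_thr_le] stage_cost_nonneg assms
    by (simp add: abs_mult B_def mult.commute mult_left_mono)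
qed

lemma threshold_cost_nonneg: "0 \<le> b \<Longrightarrow> b < 1 \<Longrightarrow> 0 \<le> threshold_cost U lam \<eta> b \<Delta>"
  unfolding threshold_cost_def
  by (intro suminf_nonneg summable_threshold_cost) (simp_all add: stage_cost_nonneg)

lemma disc_cost_threshold:
  assumes "0 \<le> b" "b < 1"
  shows "disc_cost U lam b \<Delta> (stat_acts (thr \<eta>) \<Delta>) = ennreal (threshold_cost U lam \<eta> b \<Delta>)"
  unfolding disc_cost_def threshold_cost_def age_stat_acts stat_acts_def
  by (rule suminf_ennreal2) (use assms summable_threshold_cost stage_cost_nonneg in auto)

lemma Vdisc_le_threshold_cost:
  assumes "0 \<le> b" "b < 1"
  shows "Vdisc U lam b \<Delta> \<le> threshold_cost U lam \<eta> b \<Delta>"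
proof -
  have "(INF d. disc_cost U lam b \<Delta> d) \<le> ennreal (threshold_cost U lam \<eta> b \<Delta>)"
    by (rule INF_lower2[of "stat_acts (thr \<eta>) \<Delta>"]) (simp_all add: disc_cost_threshold assms)
  then show ?thesis
    unfolding Vdisc_def using threshold_cost_nonneg[OF assms] enn2real_mono by fastforce
qed

lemma INF_disc_cost_finite:
  assumes "0 \<le> b" "b < 1"
  shows "(INF d. disc_cost U lam b \<Delta> d) < top"
proof -
  have "(INF d. disc_cost U lam b \<Delta> d) \<le> ennreal (threshold_cost U lam 0 b \<Delta>)"
    by (rule INF_lower2[of "stat_acts (thr 0) \<Delta>"]) (simp_all add: disc_cost_threshold assms)
  then show ?thesis
    using ennreal_less_top le_less_trans by blast
qed

lemma threshold_cost_step:
  assumes "0 \<le> b" "b < 1"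
  shows "threshold_cost U lam \<eta> b \<Delta>
    = stage_cost U lam \<Delta> (thr \<eta> \<Delta>) + b * threshold_cost U lam \<eta> b (succ \<Delta> (thr \<eta> \<Delta>))"
proof -
  define s where "s = succ \<Delta> (thr \<eta> \<Delta>)"
  define f where "f = (\<lambda>k. b ^ k * stage_cost U lam (sage (thr \<eta>) \<Delta> k) (thr \<eta> (sage (thr \<eta>) \<Delta> k)))"
  have "(\<lambda>k. f (Suc k))
      = (\<lambda>k. b * (b ^ k * stage_cost U lam (sage (thr \<eta>) s k) (thr \<eta> (sage (thr \<eta>) s k))))"
    unfolding f_def s_def by (simp only: sage_Suc_shift power_Suc mult_ac)
  then have "(\<Sum>k. f (Suc k)) = b * threshold_cost U lam \<eta> b s"
    unfolding threshold_cost_def by (simp add: suminf_mult summable_threshold_cost assms)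
  moreover have "(\<Sum>k. f (Suc k)) = suminf f - f 0"
    unfolding f_def by (intro suminf_split_head summable_threshold_cost assms)
  ultimately show ?thesis
    unfolding threshold_cost_def f_def[symmetric] s_def by (simp add: f_def)
qed

text \<open>From age \<open>1\<close> the threshold policy is periodic with period \<open>max \<eta> 1\<close>, so its cost is a
  geometric series of discounted cycle costs.\<close>
lemma threshold_cost_from_1:
  assumes "0 \<le> b" "b < 1"
  shows "(1 - b ^ max \<eta> 1) * threshold_cost U lam \<eta> b 1 = cycle_cost U lam (max \<eta> 1) b"
proof -
  define L where "L = max \<eta> 1"
  define f where "f = (\<lambda>k. b ^ k * stage_cost U lam (sage (thr \<eta>) 1 k) (thr \<eta> (sage (thr \<eta>) 1 k)))"
  have summable: "summable f"
    unfolding f_def by (rule summable_threshold_cost[OF assms])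
  have f_eq: "f k = b ^ k * stage_cost U lam (k mod L + 1) (L \<le> k mod L + 1)" for k
    unfolding f_def sage_thr_from_1 L_def by (simp add: thr_iff)
  have "f (k + L) = b ^ L * f k" for k
    unfolding f_eq by (simp add: power_add mult_ac)
  then have shifted: "(\<Sum>k. f (k + L)) = b ^ L * suminf f"
    using suminf_mult[OF summable] by simp
  obtain m where m: "L = Suc m"
    unfolding L_def using not0_implies_Suc by force
  have "(1 - b ^ L) * suminf f = (\<Sum>k<L. f k)"
    using suminf_split_initial_segment[OF summable, of L] shifted
    by (simp add: algebra_simps)
  also have "\<dots> = (\<Sum>k<m. f k) + f m"
    using m by simp
  also have "(\<Sum>k<m. f k) = (\<Sum>k<m. b ^ k * U (Suc k))"
    using m by (intro sum.cong) (auto simp: f_eq stage_cost_def)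
  also have "f m = b ^ m * U (Suc m) + b ^ (L - 1) * lam"
    using m by (simp add: f_eq stage_cost_def distrib_left)
  finally show ?thesis
    unfolding threshold_cost_def f_def[symmetric] cycle_cost_def L_def[symmetric] using m by simp
qed

lemma tendsto_cycle_cost_div:
  assumes "1 \<le> l"
  shows "((\<lambda>b. cycle_cost U lam l b / (\<Sum>k<l. b ^ k)) \<longlongrightarrow> cycle_cost U lam l 1 / l) (at_left 1)"
proof -
  have "((\<lambda>b. cycle_cost U lam l b / (\<Sum>k<l. b ^ k)) \<longlongrightarrow> cycle_cost U lam l 1 / (\<Sum>k<l. 1 ^ k))
      (at_left 1)"
    unfolding cycle_cost_def using assms by (intro tendsto_intros) auto
  then show ?thesis
    by simp
qed

lemma tendsto_threshold_cost_from_1: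
  "((\<lambda>b. (1 - b) * threshold_cost U lam \<eta> b 1) \<longlongrightarrow> threshold_avg U lam \<eta>) (at_left 1)"
proof (rule Lim_transform_eventually)
  define L where "L = max \<eta> 1"
  show "((\<lambda>b. cycle_cost U lam L b / (\<Sum>k<L. b ^ k)) \<longlongrightarrow> threshold_avg U lam \<eta>) (at_left 1)"
    unfolding threshold_avg_def L_def by (rule tendsto_cycle_cost_div) simp
  show "eventually (\<lambda>b. cycle_cost U lam L b / (\<Sum>k<L. b ^ k) = (1 - b) * threshold_cost U lam \<eta> b 1)
      (at_left 1)"
    using eventually_discount_at_left_1
  proof (rule eventually_mono)
    fix b :: real
    assume b: "0 < b \<and> b < 1"
    have "1 \<le> (\<Sum>k<L. b ^ k)"
      using member_le_sum[of 0 "{..<L}" "\<lambda>k. b ^ k"] b unfolding L_def by simp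
    moreover have "cycle_cost U lam L b = (1 - b) * threshold_cost U lam \<eta> b 1 * (\<Sum>k<L. b ^ k)"
      using threshold_cost_from_1[of b \<eta>] b one_diff_power_eq[of b L] by (simp add: L_def mult_ac)
    ultimately show "cycle_cost U lam L b / (\<Sum>k<L. b ^ k) = (1 - b) * threshold_cost U lam \<eta> b 1"
      by simp
  qed
qed

lemma tendsto_threshold_relative_cost_step:
  assumes "((\<lambda>b. threshold_cost U lam \<eta> b (succ \<Delta> (thr \<eta> \<Delta>)) - threshold_cost U lam \<eta> b 1)
      \<longlongrightarrow> F) (at_left 1)"
  shows "((\<lambda>b. threshold_cost U lam \<eta> b \<Delta> - threshold_cost U lam \<eta> b 1)
      \<longlongrightarrow> stage_cost U lam \<Delta> (thr \<eta> \<Delta>) + F - threshold_avg U lam \<eta>) (at_left 1)"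
proof -
  let ?J = "threshold_cost U lam \<eta>" and ?c = "stage_cost U lam \<Delta> (thr \<eta> \<Delta>)"
    and ?s = "succ \<Delta> (thr \<eta> \<Delta>)"
  have "((\<lambda>b. ?c + b * (?J b ?s - ?J b 1) - (1 - b) * ?J b 1)
      \<longlongrightarrow> ?c + 1 * F - threshold_avg U lam \<eta>) (at_left 1)"
    by (intro tendsto_intros assms tendsto_threshold_cost_from_1)
  moreover have "?c + b * (?J b ?s - ?J b 1) - (1 - b) * ?J b 1 = ?J b \<Delta> - ?J b 1"
    if "0 < b \<and> b < 1" for b
    using threshold_cost_step[of b \<eta> \<Delta>] that by (simp add: right_diff_distrib left_diff_distrib)
  then have "\<forall>\<^sub>F b in at_left 1. ?c + b * (?J b ?s - ?J b 1) - (1 - b) * ?J b 1 = ?J b \<Delta> - ?J b 1"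
    using eventually_discount_at_left_1 by (rule eventually_mono[rotated])
  ultimately show ?thesis
    by (auto intro: Lim_transform_eventually)
qed

text \<open>Backward induction from the threshold: at ages \<open>\<ge> max \<eta> 1\<close> the policy senses and
  restarts at age \<open>1\<close>, below it the age moves up by one.\<close>
lemma threshold_relative_cost_convergent:
  assumes "1 \<le> \<Delta>"
  shows "\<exists>F. ((\<lambda>b. threshold_cost U lam \<eta> b \<Delta> - threshold_cost U lam \<eta> b 1) \<longlongrightarrow> F) (at_left 1)"
proof -
  have sensing_ages: "\<exists>F. ((\<lambda>b. threshold_cost U lam \<eta> b a - threshold_cost U lam \<eta> b 1) \<longlongrightarrow> F)
      (at_left 1)" if "max \<eta> 1 \<le> a" for a
  proof -
    have "succ a (thr \<eta> a) = 1"
      using that by (simp add: thr_iff succ_def)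
    then show ?thesis
      using tendsto_threshold_relative_cost_step[of \<eta> a 0] by auto
  qed
  show ?thesis
  proof (cases "max \<eta> 1 \<le> \<Delta>")
    case True
    then show ?thesis
      by (rule sensing_ages)
  next
    case False
    then have "\<Delta> \<le> max \<eta> 1"
      using nat_le_linear by blast
    then show ?thesis
    proof (induction rule: inc_induct)
      case base
      then show ?case
        by (rule sensing_ages) simp
    next
      case (step n)
      then have "succ n (thr \<eta> n) = Suc n"
        using assms by (simp add: thr_iff succ_def)
      then show ?case
        using step.IH tendsto_threshold_relative_cost_step[of \<eta> n] by auto
    qed
  qed
qed

lemma tendsto_threshold_bias:
  assumes "1 \<le> \<Delta>"
  shows "((\<lambda>b. threshold_cost U lam \<eta> b \<Delta> - threshold_cost U lam \<eta> b 1)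
      \<longlongrightarrow> threshold_bias U lam \<eta> \<Delta>) (at_left 1)"
  using threshold_relative_cost_convergent[OF assms] tendsto_Lim[OF trivial_limit_at_left_real]
  unfolding threshold_bias_def by metis

lemma threshold_bias_eq:
  assumes "1 \<le> \<Delta>"
  shows "threshold_avg U lam \<eta> + threshold_bias U lam \<eta> \<Delta>
    = stage_cost U lam \<Delta> (thr \<eta> \<Delta>) + threshold_bias U lam \<eta> (succ \<Delta> (thr \<eta> \<Delta>))"
  using tendsto_unique[OF trivial_limit_at_left_real tendsto_threshold_bias[OF assms]
      tendsto_threshold_relative_cost_step[OF tendsto_threshold_bias[OF succ_ge_1]]]
  by simp

lemma tendsto_threshold_cost:
  assumes "1 \<le> \<Delta>"
  shows "((\<lambda>b. (1 - b) * threshold_cost U lam \<eta> b \<Delta>) \<longlongrightarrow> threshold_avg U lam \<eta>) (at_left 1)"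
proof -
  have "((\<lambda>b. (1 - b) * threshold_cost U lam \<eta> b 1
        + (1 - b) * (threshold_cost U lam \<eta> b \<Delta> - threshold_cost U lam \<eta> b 1))
      \<longlongrightarrow> threshold_avg U lam \<eta> + (1 - 1) * threshold_bias U lam \<eta> \<Delta>) (at_left 1)"
    by (intro tendsto_intros tendsto_threshold_cost_from_1 tendsto_threshold_bias assms)
  then show ?thesis
    by (simp add: algebra_simps)
qed

lemma avg_cost_threshold_le:
  assumes "1 \<le> \<Delta>"
  shows "avg_cost U lam \<Delta> (stat_acts (thr \<eta>) \<Delta>) \<le> ereal (threshold_avg U lam \<eta>)"
proof -
  define g where "g = threshold_avg U lam \<eta>"
  define f where "f = threshold_bias U lam \<eta>"
  define a where "a = sage (thr \<eta>) \<Delta>"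
  define W where "W = (\<Sum>i\<le>max \<Delta> (max \<eta> 1). \<bar>f i\<bar>)"
  have f_bounded: "\<bar>f (a k)\<bar> \<le> W" for k
    unfolding W_def a_def by (intro member_le_sum) (use sage_thr_le in auto)
  have cost_eq: "stage_cost U lam (a k) (thr \<eta> (a k)) = g + f (a k) - f (a (Suc k))" for k
    using threshold_bias_eq[OF sage_ge_1[OF assms]] unfolding a_def f_def g_def by simp
  have partial_sum: "(\<Sum>k\<le>m. stage_cost U lam (age \<Delta> (stat_acts (thr \<eta>) \<Delta>) k) (stat_acts (thr \<eta>) \<Delta> k))
      = real (Suc m) * g - (f (a (Suc m)) - f (a 0))" for m
  proof -
    have "(\<Sum>k\<le>m. stage_cost U lam (age \<Delta> (stat_acts (thr \<eta>) \<Delta>) k) (stat_acts (thr \<eta>) \<Delta> k))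
        = (\<Sum>k<Suc m. g - (f (a (Suc k)) - f (a k)))"
      unfolding age_stat_acts stat_acts_def lessThan_Suc_atMost a_def[symmetric] cost_eq
      by (simp add: algebra_simps)
    also have "\<dots> = real (Suc m) * g - (\<Sum>k<Suc m. f (a (Suc k)) - f (a k))"
      by (subst sum_subtractf) simp
    finally show ?thesis
      by (simp only: sum_lessThan_telescope[of "\<lambda>k. f (a k)"])
  qed
  have "\<forall>\<^sub>F m in sequentially.
      ereal ((1 / real m) * (\<Sum>k\<le>m. stage_cost U lam (age \<Delta> (stat_acts (thr \<eta>) \<Delta>) k)
        (stat_acts (thr \<eta>) \<Delta> k)))
      \<le> ereal (g + (g + 2 * W) / real m)"
    unfolding eventually_sequentially
  proof (intro exI[of _ 1] allI impI)
    fix m :: nat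
    assume m: "1 \<le> m"
    have "real (Suc m) * g - (f (a (Suc m)) - f (a 0)) \<le> real m * g + (g + 2 * W)"
      using f_bounded[of "Suc m"] f_bounded[of 0] by (simp add: algebra_simps abs_le_iff)
    then have "(1 / real m) * (real (Suc m) * g - (f (a (Suc m)) - f (a 0)))
        \<le> (1 / real m) * (real m * g + (g + 2 * W))"
      by (intro mult_left_mono) auto
    also have "\<dots> = g + (g + 2 * W) / real m"
      using m by (simp add: field_simps)
    finally show "ereal ((1 / real m) * (\<Sum>k\<le>m. stage_cost U lam (age \<Delta> (stat_acts (thr \<eta>) \<Delta>) k)
        (stat_acts (thr \<eta>) \<Delta> k)))
      \<le> ereal (g + (g + 2 * W) / real m)"
      unfolding partial_sum by simp
  qed
  then have "avg_cost U lam \<Delta> (stat_acts (thr \<eta>) \<Delta>) \<le> limsup (\<lambda>m. ereal (g + (g + 2 * W) / real m))"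
    unfolding avg_cost_def by (rule Limsup_mono)
  then show ?thesis
    unfolding g_def limsup_ereal_const_plus_div .
qed

end

section \<open>Lower bounds for arbitrary policies\<close>

definition potential :: "(nat \<Rightarrow> real) \<Rightarrow> real \<Rightarrow> nat \<Rightarrow> real" where
  "potential U g a = (\<Sum>k<a - 1. U (Suc k) - g)"

lemma potential_Suc: "1 \<le> a \<Longrightarrow> potential U g (Suc a) = potential U g a + U a - g"
  by (cases a) (simp_all add: potential_def)

lemma potential_Suc_0 [simp]: "potential U g (Suc 0) = 0"
  by (simp add: potential_def)

text \<open>If no renewal cycle has average cost below \<open>g\<close>, then \<open>- potential U g\<close> is a
  subsolution of the average cost optimality equation that is bounded above by \<open>lam\<close>;
  telescoping along any trajectory bounds every policy's cost from below.\<close>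
locale sensing_mdp_gain_bound = sensing_mdp +
  fixes g :: real
  assumes cycle_cost_ge: "\<And>l. 1 \<le> l \<Longrightarrow> real l * g \<le> cycle_cost U lam l 1"
begin

lemma potential_ge: "0 \<le> potential U g a + lam"
proof (cases "a - 1 = 0")
  case True
  then show ?thesis
    using lam_nonneg by (simp add: potential_def)
next
  case False
  then have "real (a - 1) * g \<le> cycle_cost U lam (a - 1) 1"
    by (intro cycle_cost_ge) simp
  then show ?thesis
    by (simp add: potential_def cycle_cost_def sum_subtractf)
qed

lemma potential_subsolution:
  assumes "1 \<le> a"
  shows "g + potential U g (succ a d) - potential U g a \<le> stage_cost U lam a d"
  using potential_ge[of "Suc a"] assms
  by (cases d) (simp_all add: succ_def potential_Suc stage_cost_def)

lemma discounted_cost_ge: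
  assumes "1 \<le> \<Delta>" "0 \<le> b" "b \<le> 1"
  shows "g * (\<Sum>k<N. b ^ k) + b ^ N * (potential U g (age \<Delta> d N) + lam) - potential U g \<Delta> - lam
    \<le> (\<Sum>k<N. b ^ k * stage_cost U lam (age \<Delta> d k) (d k))"
proof (induction N)
  case 0
  then show ?case
    by simp
next
  case (Suc N)
  define a where "a = age \<Delta> d N"
  have "b ^ N * (g + potential U g (succ a (d N)) - potential U g a) \<le> b ^ N * stage_cost U lam a (d N)"
    using potential_subsolution[OF age_ge_1[OF assms(1)]] assms unfolding a_def
    by (intro mult_left_mono) auto
  moreover have "b ^ Suc N * (potential U g (succ a (d N)) + lam)
      \<le> b ^ N * (potential U g (succ a (d N)) + lam)"
    using potential_ge assms by (intro mult_right_mono) (auto simp: mult_left_le_one_le)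
  ultimately show ?case
    using Suc unfolding a_def by (simp add: algebra_simps)
qed

lemma disc_cost_ge:
  assumes "1 \<le> \<Delta>" "0 \<le> b" "b \<le> 1"
  shows "ennreal (g * (\<Sum>k<N. b ^ k) - potential U g \<Delta> - lam) \<le> disc_cost U lam b \<Delta> d"
proof -
  have "0 \<le> b ^ N * (potential U g (age \<Delta> d N) + lam)"
    using potential_ge assms(2) by simp
  then have "g * (\<Sum>k<N. b ^ k) - potential U g \<Delta> - lam
      \<le> (\<Sum>k<N. b ^ k * stage_cost U lam (age \<Delta> d k) (d k))"
    using discounted_cost_ge[OF assms, of N d] by linarith
  then have "ennreal (g * (\<Sum>k<N. b ^ k) - potential U g \<Delta> - lam)
      \<le> (\<Sum>k<N. ennreal (b ^ k * stage_cost U lam (age \<Delta> d k) (d k)))"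
    using assms(2) stage_cost_nonneg by (simp add: ennreal_leI sum_ennreal)
  also have "\<dots> \<le> disc_cost U lam b \<Delta> d"
    unfolding disc_cost_def by (rule sum_le_suminf[OF summableI]) auto
  finally show ?thesis .
qed

lemma Vdisc_ge:
  assumes "1 \<le> \<Delta>" "0 < b" "b < 1"
  shows "g / (1 - b) - potential U g \<Delta> - lam \<le> Vdisc U lam b \<Delta>"
proof -
  define I where "I = (INF d. disc_cost U lam b \<Delta> d)"
  have finite: "I < top"
    unfolding I_def using assms by (intro INF_disc_cost_finite) auto
  have "g * (\<Sum>k<N. b ^ k) - potential U g \<Delta> - lam \<le> enn2real I" for N
  proof (cases "0 \<le> g * (\<Sum>k<N. b ^ k) - potential U g \<Delta> - lam")
    case True
    have "ennreal (g * (\<Sum>k<N. b ^ k) - potential U g \<Delta> - lam) \<le> I"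
      unfolding I_def using assms by (intro INF_greatest disc_cost_ge) auto
    then show ?thesis
      using enn2real_mono[OF _ finite] True by fastforce
  next
    case False
    then show ?thesis
      using enn2real_nonneg[of I] by linarith
  qed
  moreover have "(\<lambda>N. g * (\<Sum>k<N. b ^ k) - potential U g \<Delta> - lam)
      \<longlonglongrightarrow> g * (1 / (1 - b)) - potential U g \<Delta> - lam"
    using geometric_sums[of b] assms by (intro tendsto_intros) (simp add: sums_def)
  ultimately have "g * (1 / (1 - b)) - potential U g \<Delta> - lam \<le> enn2real I"
    by (intro LIMSEQ_le_const2) auto
  then show ?thesis
    unfolding Vdisc_def I_def by simp
qed

lemma avg_cost_ge:
  assumes "1 \<le> \<Delta>"
  shows "ereal g \<le> avg_cost U lam \<Delta> d"
proof -
  define K where "K = potential U g \<Delta> + lam"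
  have "\<forall>\<^sub>F m in sequentially. ereal (g + (g - K) / real m)
      \<le> ereal ((1 / real m) * (\<Sum>k\<le>m. stage_cost U lam (age \<Delta> d k) (d k)))"
    unfolding eventually_sequentially
  proof (intro exI[of _ 1] allI impI)
    fix m :: nat
    assume m: "1 \<le> m"
    have "g * real (Suc m) - K \<le> (\<Sum>k\<le>m. stage_cost U lam (age \<Delta> d k) (d k))"
      using discounted_cost_ge[OF assms, of 1 "Suc m" d] potential_ge[of "age \<Delta> d (Suc m)"]
      unfolding K_def by (simp add: lessThan_Suc_atMost)
    then have "(1 / real m) * (g * real (Suc m) - K)
        \<le> (1 / real m) * (\<Sum>k\<le>m. stage_cost U lam (age \<Delta> d k) (d k))"
      by (intro mult_left_mono) auto
    moreover have "(1 / real m) * (g * real (Suc m) - K) = g + (g - K) / real m"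
      using m by (simp add: field_simps)
    ultimately show "ereal (g + (g - K) / real m)
        \<le> ereal ((1 / real m) * (\<Sum>k\<le>m. stage_cost U lam (age \<Delta> d k) (d k)))"
      by simp
  qed
  then have "limsup (\<lambda>m. ereal (g + (g - K) / real m)) \<le> avg_cost U lam \<Delta> d"
    unfolding avg_cost_def by (rule Limsup_mono)
  then show ?thesis
    unfolding limsup_ereal_const_plus_div .
qed

end

section \<open>Optimality of the limiting threshold\<close>

locale threshold_optimal = sensing_mdp +
  fixes \<gamma> :: "nat \<Rightarrow> real" and \<eta> :: nat
  assumes discount_pos: "\<And>j. 0 < \<gamma> j" and discount_less_1: "\<And>j. \<gamma> j < 1"
    and discount_lim: "\<gamma> \<longlonglongrightarrow> 1"
    and threshold_disc_optimal: "\<And>j \<Delta>. 1 \<le> \<Delta> \<Longrightarrow>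
      disc_cost U lam (\<gamma> j) \<Delta> (stat_acts (thr \<eta>) \<Delta>) = (INF d. disc_cost U lam (\<gamma> j) \<Delta> d)"
    and bellman: "\<And>j \<Delta>. 1 \<le> \<Delta> \<Longrightarrow> Vdisc U lam (\<gamma> j) \<Delta>
      = min (stage_cost U lam \<Delta> False + \<gamma> j * Vdisc U lam (\<gamma> j) (succ \<Delta> False))
            (stage_cost U lam \<Delta> True + \<gamma> j * Vdisc U lam (\<gamma> j) (succ \<Delta> True))"
begin

lemma filterlim_discount_at_left_1: "filterlim \<gamma> (at_left 1) sequentially"
  unfolding filterlim_at using discount_lim discount_less_1
  by (simp add: less_imp_neq always_eventually)

lemma tendsto_along_discount:
  "(f \<longlongrightarrow> c) (at_left 1) \<Longrightarrow> (\<lambda>j. f (\<gamma> j)) \<longlonglongrightarrow> c"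
  using filterlim_compose filterlim_discount_at_left_1 by blast

lemma Vdisc_eq_threshold_cost:
  assumes "1 \<le> \<Delta>"
  shows "Vdisc U lam (\<gamma> j) \<Delta> = threshold_cost U lam \<eta> (\<gamma> j) \<Delta>"
proof -
  have "(INF d. disc_cost U lam (\<gamma> j) \<Delta> d) = ennreal (threshold_cost U lam \<eta> (\<gamma> j) \<Delta>)"
    using threshold_disc_optimal[OF assms, of j] discount_pos[of j] discount_less_1[of j]
    by (simp add: disc_cost_threshold)
  then show ?thesis
    using discount_pos[of j] discount_less_1[of j] by (simp add: Vdisc_def threshold_cost_nonneg)
qed

text \<open>The optimality of \<open>\<eta>\<close> against the threshold \<open>l\<close>, scaled by \<open>1 - \<gamma> j\<close>, passes to
  the limit \<open>j \<rightarrow> \<infinity>\<close>.\<close>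
lemma threshold_avg_le_cycle_avg:
  assumes "1 \<le> l"
  shows "real l * threshold_avg U lam \<eta> \<le> cycle_cost U lam l 1"
proof -
  have cheaper: "(1 - \<gamma> j) * threshold_cost U lam \<eta> (\<gamma> j) 1
      \<le> (1 - \<gamma> j) * threshold_cost U lam l (\<gamma> j) 1" for j
  proof -
    have "disc_cost U lam (\<gamma> j) 1 (stat_acts (thr \<eta>) 1)
        \<le> disc_cost U lam (\<gamma> j) 1 (stat_acts (thr l) 1)"
      unfolding threshold_disc_optimal[OF order_refl] by (rule INF_lower) simp
    then have "threshold_cost U lam \<eta> (\<gamma> j) 1 \<le> threshold_cost U lam l (\<gamma> j) 1"
      using discount_pos[of j] discount_less_1[of j]
      by (simp add: disc_cost_threshold threshold_cost_nonneg)
    then show ?thesis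
      using discount_less_1[of j] by (intro mult_left_mono) auto
  qed
  have limit: "(\<lambda>j. (1 - \<gamma> j) * threshold_cost U lam e (\<gamma> j) 1) \<longlonglongrightarrow> threshold_avg U lam e" for e
    by (rule tendsto_along_discount) (rule tendsto_threshold_cost_from_1)
  have "threshold_avg U lam \<eta> \<le> threshold_avg U lam l"
    by (rule tendsto_le[OF trivial_limit_sequentially limit limit]) (use cheaper in \<open>simp add: always_eventually\<close>)
  then show ?thesis
    using assms by (simp add: threshold_avg_def max_absorb1 field_simps)
qed

sublocale sensing_mdp_gain_bound U lam "threshold_avg U lam \<eta>"
  by unfold_locales (rule threshold_avg_le_cycle_avg)

lemma tendsto_scaled_Vdisc:
  assumes "1 \<le> \<Delta>"
  shows "((\<lambda>b. (1 - b) * Vdisc U lam b \<Delta>) \<longlongrightarrow> threshold_avg U lam \<eta>) (at_left 1)"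
proof (rule tendsto_sandwich)
  define K where "K = potential U (threshold_avg U lam \<eta>) \<Delta> + lam"
  have "((\<lambda>b. threshold_avg U lam \<eta> - (1 - b) * K) \<longlongrightarrow> threshold_avg U lam \<eta> - (1 - 1) * K) (at_left 1)"
    by (intro tendsto_intros)
  then show "((\<lambda>b. threshold_avg U lam \<eta> - (1 - b) * K) \<longlongrightarrow> threshold_avg U lam \<eta>) (at_left 1)"
    by simp
  show "((\<lambda>b. (1 - b) * threshold_cost U lam \<eta> b \<Delta>) \<longlongrightarrow> threshold_avg U lam \<eta>) (at_left 1)"
    by (rule tendsto_threshold_cost[OF assms])
  show "\<forall>\<^sub>F b in at_left 1. threshold_avg U lam \<eta> - (1 - b) * K \<le> (1 - b) * Vdisc U lam b \<Delta>"
    using eventually_discount_at_left_1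
  proof (rule eventually_mono)
    fix b :: real
    assume b: "0 < b \<and> b < 1"
    then have "threshold_avg U lam \<eta> / (1 - b) - K \<le> Vdisc U lam b \<Delta>"
      using Vdisc_ge[OF assms, of b] unfolding K_def by linarith
    then have "(1 - b) * (threshold_avg U lam \<eta> / (1 - b) - K) \<le> (1 - b) * Vdisc U lam b \<Delta>"
      using b by (intro mult_left_mono) auto
    moreover have "(1 - b) * (threshold_avg U lam \<eta> / (1 - b) - K) = threshold_avg U lam \<eta> - (1 - b) * K"
      using b by (simp add: field_simps)
    ultimately show "threshold_avg U lam \<eta> - (1 - b) * K \<le> (1 - b) * Vdisc U lam b \<Delta>"
      by simp
  qed
  show "\<forall>\<^sub>F b in at_left 1. (1 - b) * Vdisc U lam b \<Delta> \<le> (1 - b) * threshold_cost U lam \<eta> b \<Delta>"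
    using eventually_discount_at_left_1
    by (rule eventually_mono) (auto intro: mult_left_mono Vdisc_le_threshold_cost)
qed

lemma tendsto_relative_Vdisc:
  assumes "1 \<le> \<Delta>"
  shows "(\<lambda>j. Vdisc U lam (\<gamma> j) \<Delta> - Vdisc U lam (\<gamma> j) 1) \<longlonglongrightarrow> threshold_bias U lam \<eta> \<Delta>"
  unfolding Vdisc_eq_threshold_cost[OF assms] Vdisc_eq_threshold_cost[OF order_refl]
  by (rule tendsto_along_discount[OF tendsto_threshold_bias[OF assms]])

lemma average_cost_optimality_equation:
  assumes "1 \<le> \<Delta>"
  shows "threshold_avg U lam \<eta> + threshold_bias U lam \<eta> \<Delta>
    = min (stage_cost U lam \<Delta> False + threshold_bias U lam \<eta> (succ \<Delta> False))
          (stage_cost U lam \<Delta> True + threshold_bias U lam \<eta> (succ \<Delta> True))"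
proof -
  define R where "R = (\<lambda>j x. Vdisc U lam (\<gamma> j) x - Vdisc U lam (\<gamma> j) 1)"
  have R_lim: "(\<lambda>j. R j x) \<longlonglongrightarrow> threshold_bias U lam \<eta> x" if "1 \<le> x" for x
    unfolding R_def by (rule tendsto_relative_Vdisc[OF that])
  have "(\<lambda>j. R j \<Delta> + (1 - \<gamma> j) * Vdisc U lam (\<gamma> j) 1)
      \<longlonglongrightarrow> threshold_bias U lam \<eta> \<Delta> + threshold_avg U lam \<eta>"
    using tendsto_along_discount[OF tendsto_threshold_cost_from_1]
    by (intro tendsto_intros R_lim assms) (simp add: Vdisc_eq_threshold_cost)
  moreover have "R j \<Delta> + (1 - \<gamma> j) * Vdisc U lam (\<gamma> j) 1
      = min (stage_cost U lam \<Delta> False + \<gamma> j * R j (succ \<Delta> False))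
            (stage_cost U lam \<Delta> True + \<gamma> j * R j (succ \<Delta> True))" for j
    unfolding R_def bellman[OF assms, of j] by (simp add: min_diff_distrib_left algebra_simps)
  moreover have "(\<lambda>j. min (stage_cost U lam \<Delta> False + \<gamma> j * R j (succ \<Delta> False))
        (stage_cost U lam \<Delta> True + \<gamma> j * R j (succ \<Delta> True)))
      \<longlonglongrightarrow> min (stage_cost U lam \<Delta> False + 1 * threshold_bias U lam \<eta> (succ \<Delta> False))
            (stage_cost U lam \<Delta> True + 1 * threshold_bias U lam \<eta> (succ \<Delta> True))"
    by (intro tendsto_intros discount_lim R_lim succ_ge_1)
  ultimately show ?thesis
    using LIMSEQ_unique by (simp add: add.commute)
qed

lemma threshold_attains_min:
  assumes "1 \<le> \<Delta>"
  shows "stage_cost U lam \<Delta> (thr \<eta> \<Delta>) + threshold_bias U lam \<eta> (succ \<Delta> (thr \<eta> \<Delta>))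
    = min (stage_cost U lam \<Delta> False + threshold_bias U lam \<eta> (succ \<Delta> False))
          (stage_cost U lam \<Delta> True + threshold_bias U lam \<eta> (succ \<Delta> True))"
  using threshold_bias_eq[OF assms] average_cost_optimality_equation[OF assms] by simp

lemma avg_cost_threshold_optimal:
  assumes "1 \<le> \<Delta>"
  shows "avg_cost U lam \<Delta> (stat_acts (thr \<eta>) \<Delta>) \<le> avg_cost U lam \<Delta> d"
  using avg_cost_threshold_le[OF assms] avg_cost_ge[OF assms] by (rule order_trans)

end

theorem theorem1:
  fixes A Q P :: "real^'n^'n" and B1 :: "real^'m1^'n" and B2 :: "real^'m2^'n"
    and R1 :: "real^'m1^'m1" and R2 :: "real^'m2^'m2" and G :: "real^'w^'n"
    and h lam :: real and U :: "nat \<Rightarrow> real"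
    and \<beta> :: "nat \<Rightarrow> real" and \<eta> :: "nat \<Rightarrow> nat" and r :: "nat \<Rightarrow> nat" and \<eta>bar :: nat
  assumes h: "h > 0" and lam: "lam \<ge> 0"
    and Q: "psd Q" and R1: "pd R1" and R2: "pd R2"
    and P_ric: "psd P \<and> riccati A B1 B2 Q R1 R2 P"
    and P_min: "\<forall>P'. psd P' \<and> riccati A B1 B2 Q R1 R2 P' \<longrightarrow> psd (P' - P)"
    and U_def: "U = Ucost A B1 B2 R1 R2 G P h"
    and bellman: "\<forall>b. 0 < b \<and> b < 1 \<longrightarrow> (\<forall>\<Delta>\<ge>1.
        Vdisc U lam b \<Delta> = min (stage_cost U lam \<Delta> False + b * Vdisc U lam b (succ \<Delta> False))
                                (stage_cost U lam \<Delta> True + b * Vdisc U lam b (succ \<Delta> True)))"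
    and \<beta>_range: "\<forall>l. 0 < \<beta> l \<and> \<beta> l < 1"
    and \<beta>_mono: "incseq \<beta>" and \<beta>_lim: "\<beta> \<longlonglongrightarrow> 1"
    and \<eta>_opt: "\<forall>l. \<forall>\<Delta>\<ge>1. disc_cost U lam (\<beta> l) \<Delta> (stat_acts (thr (\<eta> l)) \<Delta>)
                             = (INF d. disc_cost U lam (\<beta> l) \<Delta> d)"
    and r: "strict_mono r" and \<eta>bar: "(\<lambda>p. \<eta> (r p)) \<longlonglongrightarrow> \<eta>bar"
  shows "\<exists>Vbar :: real. \<exists>f :: nat \<Rightarrow> real.
     (\<forall>\<Delta>\<ge>1. ((\<lambda>b. (1 - b) * Vdisc U lam b \<Delta>) \<longlongrightarrow> Vbar) (at_left 1))
   \<and> (\<exists>\<gamma> :: nat \<Rightarrow> real. (\<forall>j. 0 < \<gamma> j \<and> \<gamma> j < 1) \<and> \<gamma> \<longlonglongrightarrow> 1 \<and>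
        (\<forall>\<Delta>\<ge>1. (\<lambda>j. Vdisc U lam (\<gamma> j) \<Delta> - Vdisc U lam (\<gamma> j) 1) \<longlonglongrightarrow> f \<Delta>))
   \<and> (\<forall>\<Delta>\<ge>1. Vbar + f \<Delta> = min (stage_cost U lam \<Delta> False + f (succ \<Delta> False))
                               (stage_cost U lam \<Delta> True + f (succ \<Delta> True)))
   \<and> (\<forall>\<Delta>\<ge>1. stage_cost U lam \<Delta> (thr \<eta>bar \<Delta>) + f (succ \<Delta> (thr \<eta>bar \<Delta>))
              = min (stage_cost U lam \<Delta> False + f (succ \<Delta> False))
                    (stage_cost U lam \<Delta> True + f (succ \<Delta> True)))
   \<and> (\<forall>\<Delta>\<ge>1. \<forall>d. avg_cost U lam \<Delta> (stat_acts (thr \<eta>bar) \<Delta>) \<le> avg_cost U lam \<Delta> d)"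
proof -
  interpret sensing_mdp U lam
    using lam P_ric R1 unfolding U_def by unfold_locales (auto intro: Ucost_nonneg)
  obtain p0 where p0: "\<And>p. p \<ge> p0 \<Longrightarrow> \<eta> (r p) = \<eta>bar"
    using \<eta>bar unfolding tendsto_discrete eventually_sequentially by blast
  define \<gamma> where "\<gamma> j = \<beta> (r (j + p0))" for j
  have "strict_mono (\<lambda>j. r (j + p0))"
    using r unfolding strict_mono_def by simp
  then have "\<gamma> \<longlonglongrightarrow> 1"
    using LIMSEQ_subseq_LIMSEQ[OF \<beta>_lim] unfolding \<gamma>_def o_def by blast
  moreover have "disc_cost U lam (\<gamma> j) \<Delta> (stat_acts (thr \<eta>bar) \<Delta>)
      = (INF d. disc_cost U lam (\<gamma> j) \<Delta> d)" if "1 \<le> \<Delta>" for j \<Delta>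
    using \<eta>_opt p0[of "j + p0"] that unfolding \<gamma>_def by (metis le_add2)
  ultimately interpret threshold_optimal U lam \<gamma> \<eta>bar
    using \<beta>_range bellman unfolding \<gamma>_def by unfold_locales auto
  show ?thesis
    using tendsto_scaled_Vdisc tendsto_relative_Vdisc average_cost_optimality_equation
      threshold_attains_min avg_cost_threshold_optimal discount_pos discount_less_1 \<open>\<gamma> \<longlonglongrightarrow> 1\<close>
    by blast
qed

end
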